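(* Let $m>0$ and $\lambda<0$. Let $v_\lambda$ be the solution on $[m/2,\infty)$ of $$v''(r)+v(r)\Big(\frac{1}{4r^2}+\frac{m}{r^3}\Big(1+\frac{m}{2r}\Big)^{-2}+\lambda\Big(1+\frac{m}{2r}\Big)^4\Big)=0,\qquad v(m/2)=1,\ v'(m/2)=m^{-1}.$$ Then $v_\lambda$ has at most one zero in $[m/2,\infty)$. Equivalently, the solution $\gamma_\lambda=v_\lambda'/v_\lambda$ of the Riccati equation $$\gamma'+\gamma^2=-\frac{1}{4r^2}-\frac{m}{r^3}\Big(1+\frac{m}{2r}\Big)^{-2}-\lambda\Big(1+\frac{m}{2r}\Big)^4,\qquad \gamma(m/2)=m^{-1},$$ has at most one singularity (a point where it passes from $-\infty$ to $+\infty$). *)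

theory Defs
  imports Complex_Main
begin

definition potential :: "real \<Rightarrow> real \<Rightarrow> real \<Rightarrow> real" where
  "potential m lam r =
     1 / (4 * r^2) + (m / r^3) / (1 + m / (2*r))^2 + lam * (1 + m / (2*r))^4"

end

theory Submission
  imports Defs
begin

(*
  Write the potential as q - c, where q is the potential for lambda = 0 and
  c = -lambda (1 + m/(2r))^4 > 0. For lambda = 0 the equation has the explicit solution
  u0 = sqrt r * psi, which has the same initial ratio u0'/u0 = 1/m as v, a single zero z,
  and changes sign there. The Wronskian W = u0 v' - u0' v vanishes at m/2 and satisfies
  W' = c u0 v, and the Picone function v W / u0 has derivative (W/u0)^2 + c v^2 > 0 wherever
  u0 does not vanish. Hence v stays positive on [m/2, z], while beyond z, where u0 < 0, two
  zeros of v would be zeros of the strictly increasing function v W / u0.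
*)

lemma has_real_derivative_within_Icc_imp_continuous_on:
  assumes "\<And>x. a \<le> x \<Longrightarrow> x \<le> b \<Longrightarrow> (f has_real_derivative f' x) (at x within {a..b})"
  shows "continuous_on {a..b} f"
  unfolding continuous_on_eq_continuous_within by (auto intro: DERIV_continuous[OF assms])

lemma DERIV_within_Icc_pos_imp_increasing:
  fixes f f' :: "real \<Rightarrow> real"
  assumes "a < b"
    and deriv: "\<And>x. a \<le> x \<Longrightarrow> x \<le> b \<Longrightarrow> (f has_real_derivative f' x) (at x within {a..b})"
    and pos: "\<And>x. a < x \<Longrightarrow> x < b \<Longrightarrow> f' x > 0"
  shows "f a < f b"
proof (rule DERIV_pos_imp_increasing_open[OF \<open>a < b\<close>])
  show "\<exists>y. DERIV f x :> y \<and> y > 0" if "a < x" "x < b" for x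
    using deriv[of x] pos[OF that] that by (auto simp: at_within_Icc_at)
  show "continuous_on {a..b} f"
    using deriv by (rule has_real_derivative_within_Icc_imp_continuous_on)
qed

lemma DERIV_within_Icc_nonneg_imp_nondecreasing:
  fixes f f' :: "real \<Rightarrow> real"
  assumes "a \<le> b"
    and deriv: "\<And>x. a \<le> x \<Longrightarrow> x \<le> b \<Longrightarrow> (f has_real_derivative f' x) (at x within {a..b})"
    and nonneg: "\<And>x. a < x \<Longrightarrow> x < b \<Longrightarrow> f' x \<ge> 0"
  shows "f a \<le> f b"
proof (rule DERIV_nonneg_imp_increasing_open[OF \<open>a \<le> b\<close>])
  show "\<exists>y. DERIV f x :> y \<and> y \<ge> 0" if "a < x" "x < b" for x
    using deriv[of x] nonneg[OF that] that by (auto simp: at_within_Icc_at)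
  show "continuous_on {a..b} f"
    using deriv by (rule has_real_derivative_within_Icc_imp_continuous_on)
qed

(* The weighted energy exp (K r) (v^2 + v'^2) is nondecreasing once K bounds |1 - p|. *)
lemma linear_ode_vanishing_data_backward:
  fixes v v' p :: "real \<Rightarrow> real" and a x B :: real
  assumes dv: "\<And>r. r \<ge> a \<Longrightarrow> (v has_real_derivative v' r) (at r within {a..})"
    and dv': "\<And>r. r \<ge> a \<Longrightarrow> (v' has_real_derivative - p r * v r) (at r within {a..})"
    and bound: "\<And>r. r \<ge> a \<Longrightarrow> \<bar>p r\<bar> \<le> B"
    and "a \<le> x" "v x = 0" "v' x = 0"
  shows "v a = 0 \<and> v' a = 0"
proof -
  define K where "K = 1 + B"
  define E where "E r = (v r)\<^sup>2 + (v' r)\<^sup>2" for r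
  define F where "F r = exp (K * r) * E r" for r
  define F' where "F' r = exp (K * r) * (K * E r + 2 * (v r * v' r) * (1 - p r))" for r
  have dF: "(F has_real_derivative F' r) (at r within {a..})" if "r \<ge> a" for r
  proof -
    have "((\<lambda>r. exp (K * r)) has_real_derivative exp (K * r) * K) (at r within {a..})"
      by (auto intro!: derivative_eq_intros)
    then have "(F has_real_derivative exp (K * r) * K * E r
        + (v' r * v r + v' r * v r + ((- p r * v r) * v' r + (- p r * v r) * v' r)) * exp (K * r))
        (at r within {a..})"
      unfolding F_def E_def power2_eq_square by (intro DERIV_mult DERIV_add dv dv' that)
    then show ?thesis
      by (rule DERIV_cong) (simp add: F'_def algebra_simps)
  qed
  have F'_nonneg: "F' r \<ge> 0" if "r \<ge> a" for r
  proof -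
    have "2 * \<bar>v r * v' r\<bar> \<le> E r"
      using sum_squares_bound[of "\<bar>v r\<bar>" "\<bar>v' r\<bar>"] by (simp add: E_def abs_mult)
    moreover have "\<bar>1 - p r\<bar> \<le> K"
      using bound[OF that] unfolding K_def by linarith
    moreover have "E r \<ge> 0"
      unfolding E_def by simp
    ultimately have "\<bar>2 * (v r * v' r) * (1 - p r)\<bar> \<le> E r * K"
      unfolding abs_mult by (intro mult_mono) auto
    then have "K * E r + 2 * (v r * v' r) * (1 - p r) \<ge> 0"
      by (simp add: algebra_simps abs_le_iff)
    then show ?thesis
      unfolding F'_def by simp
  qed
  have "F a \<le> F x"
  proof (rule DERIV_within_Icc_nonneg_imp_nondecreasing[OF \<open>a \<le> x\<close>])
    show "(F has_real_derivative F' r) (at r within {a..x})" if "a \<le> r" "r \<le> x" for r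
      using dF[OF that(1)] by (rule DERIV_subset) auto
    show "F' r \<ge> 0" if "a < r" "r < x" for r
      using F'_nonneg that by simp
  qed
  also have "F x = 0"
    unfolding F_def E_def using assms by simp
  finally have "E a \<le> 0"
    unfolding F_def by (simp add: mult_le_0_iff)
  then show ?thesis
    unfolding E_def by (simp add: sum_power2_le_zero_iff)
qed

locale sturm_comparison =
  fixes a0 :: real and q c u u' v v' :: "real \<Rightarrow> real"
  assumes u_deriv: "\<And>r. r \<ge> a0 \<Longrightarrow> (u has_real_derivative u' r) (at r within {a0..})"
    and u'_deriv: "\<And>r. r \<ge> a0 \<Longrightarrow> (u' has_real_derivative - q r * u r) (at r within {a0..})"
    and v_deriv: "\<And>r. r \<ge> a0 \<Longrightarrow> (v has_real_derivative v' r) (at r within {a0..})"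
    and v'_deriv: "\<And>r. r \<ge> a0 \<Longrightarrow>
      (v' has_real_derivative - (q r - c r) * v r) (at r within {a0..})"
    and c_pos: "\<And>r. r \<ge> a0 \<Longrightarrow> c r > 0"
    and v_no_double_zero: "\<And>r. r \<ge> a0 \<Longrightarrow> v r = 0 \<Longrightarrow> v' r \<noteq> 0"
begin

definition wronskian :: "real \<Rightarrow> real" where
  "wronskian r = u r * v' r - u' r * v r"

definition picone :: "real \<Rightarrow> real" where
  "picone r = v r * wronskian r / u r"

lemma wronskian_deriv:
  assumes "r \<ge> a0"
  shows "(wronskian has_real_derivative c r * u r * v r) (at r within {a0..})"
proof -
  have "(wronskian has_real_derivative
      (u' r * v' r + (- (q r - c r) * v r) * u r) - ((- q r * u r) * v r + v' r * u' r))
      (at r within {a0..})"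
    unfolding wronskian_def[abs_def]
    by (intro DERIV_diff DERIV_mult u_deriv u'_deriv v_deriv v'_deriv assms)
  then show ?thesis
    by (rule DERIV_cong) (simp add: algebra_simps)
qed

lemma picone_deriv:
  assumes "r \<ge> a0" "u r \<noteq> 0"
  shows "(picone has_real_derivative (wronskian r / u r)\<^sup>2 + c r * (v r)\<^sup>2) (at r within {a0..})"
proof -
  have "(picone has_real_derivative
      ((v' r * wronskian r + c r * u r * v r * v r) * u r - v r * wronskian r * u' r)
      / (u r * u r)) (at r within {a0..})"
    unfolding picone_def[abs_def]
    by (intro DERIV_divide DERIV_mult v_deriv wronskian_deriv u_deriv assms)
  then show ?thesis
    by (rule DERIV_cong) (use assms(2) in \<open>simp add: wronskian_def field_simps power2_eq_square\<close>)
qed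

lemma picone_deriv_pos:
  assumes "r \<ge> a0" "u r \<noteq> 0"
  shows "(wronskian r / u r)\<^sup>2 + c r * (v r)\<^sup>2 > 0"
proof (cases "v r = 0")
  case True
  then have "wronskian r / u r = v' r"
    using assms(2) by (simp add: wronskian_def)
  then show ?thesis
    using True v_no_double_zero[OF assms(1)] by simp
next
  case False
  then show ?thesis
    using c_pos[OF assms(1)] by (simp add: add_nonneg_pos)
qed

lemma picone_strict_mono:
  assumes "a0 \<le> a" "a < b" "\<And>r. a \<le> r \<Longrightarrow> r \<le> b \<Longrightarrow> u r \<noteq> 0"
  shows "picone a < picone b"
proof (rule DERIV_within_Icc_pos_imp_increasing[OF \<open>a < b\<close>])
  show "(picone has_real_derivative (wronskian r / u r)\<^sup>2 + c r * (v r)\<^sup>2) (at r within {a..b})"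
    if "a \<le> r" "r \<le> b" for r
  proof (rule DERIV_subset)
    show "(picone has_real_derivative (wronskian r / u r)\<^sup>2 + c r * (v r)\<^sup>2) (at r within {a0..})"
      using assms that by (intro picone_deriv) auto
  qed (use assms(1) in auto)
  show "(wronskian r / u r)\<^sup>2 + c r * (v r)\<^sup>2 > 0" if "a < r" "r < b" for r
    using assms that by (intro picone_deriv_pos) auto
qed

lemma zeros_separated_where_u_nonzero:
  assumes "a0 \<le> a" "a < b" "\<And>r. a \<le> r \<Longrightarrow> r \<le> b \<Longrightarrow> u r \<noteq> 0" "v a = 0"
  shows "v b \<noteq> 0"
  using picone_strict_mono[OF assms(1-3)] \<open>v a = 0\<close> by (auto simp: picone_def)

lemma v_pos_up_to_first_zero_of_u:
  assumes "a0 < z" "\<And>r. a0 \<le> r \<Longrightarrow> r < z \<Longrightarrow> u r > 0" "u z = 0"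
    and "v a0 > 0" "wronskian a0 = 0"
    and "a0 \<le> r" "r \<le> z"
  shows "v r > 0"
proof -
  have v_cont: "continuous_on {a0..} v"
    unfolding continuous_on_eq_continuous_within by (auto intro: DERIV_continuous[OF v_deriv])
  have pos_if_no_zero: "v x > 0" if "a0 \<le> x" "\<And>y. a0 < y \<Longrightarrow> y \<le> x \<Longrightarrow> v y \<noteq> 0" for x
  proof (rule ccontr)
    assume "\<not> v x > 0"
    moreover have "continuous_on {a0..x} v"
      using v_cont by (rule continuous_on_subset) auto
    ultimately obtain y where "a0 \<le> y" "y \<le> x" "v y = 0"
      using IVT2'[of v x 0 a0] \<open>v a0 > 0\<close> \<open>a0 \<le> x\<close> by auto
    then show False
      using that(2)[of y] \<open>v a0 > 0\<close> by (cases "y = a0") auto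
  qed
  have no_zero_before_z: "v y \<noteq> 0" if "a0 < y" "y < z" for y
  proof
    assume "v y = 0"
    have "u x \<noteq> 0" if "a0 \<le> x" "x \<le> y" for x
      using assms(2)[of x] that \<open>y < z\<close> by simp
    then have "picone a0 < picone y"
      using picone_strict_mono[OF order_refl \<open>a0 < y\<close>] by blast
    then show False
      using \<open>v y = 0\<close> \<open>wronskian a0 = 0\<close> by (simp add: picone_def)
  qed
  have pos_before_z: "v x > 0" if "a0 \<le> x" "x < z" for x
    using that no_zero_before_z by (intro pos_if_no_zero) auto
  have "wronskian a0 < wronskian z"
  proof (rule DERIV_within_Icc_pos_imp_increasing[OF \<open>a0 < z\<close>])
    show "(wronskian has_real_derivative c x * u x * v x) (at x within {a0..z})"
      if "a0 \<le> x" "x \<le> z" for x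
      using wronskian_deriv[OF that(1)] by (rule DERIV_subset) auto
    show "c x * u x * v x > 0" if "a0 < x" "x < z" for x
      using c_pos[of x] assms(2)[of x] pos_before_z[of x] that by simp
  qed
  then have "v z \<noteq> 0"
    using \<open>u z = 0\<close> \<open>wronskian a0 = 0\<close> by (auto simp: wronskian_def)
  then have "v y \<noteq> 0" if "a0 < y" "y \<le> z" for y
    using no_zero_before_z[of y] that by (cases "y = z") auto
  then show ?thesis
    using assms(6,7) by (intro pos_if_no_zero) auto
qed

theorem at_most_one_zero:
  assumes "a0 < z" "\<And>r. a0 \<le> r \<Longrightarrow> r < z \<Longrightarrow> u r > 0" "u z = 0"
    and "\<And>r. r > z \<Longrightarrow> u r \<noteq> 0" and "v a0 > 0" "wronskian a0 = 0"
    and "a0 \<le> r1" "a0 \<le> r2" "v r1 = 0" "v r2 = 0"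
  shows "r1 = r2"
proof -
  have beyond_z: "r > z" if "a0 \<le> r" "v r = 0" for r
  proof (rule ccontr)
    assume "\<not> r > z"
    then have "v r > 0"
      using v_pos_up_to_first_zero_of_u[OF assms(1-3,5,6) that(1)] by simp
    with \<open>v r = 0\<close> show False
      by simp
  qed
  have no_second_zero: "v b \<noteq> 0" if "a0 \<le> a" "a < b" "v a = 0" for a b
  proof (rule zeros_separated_where_u_nonzero[OF that(1,2) _ that(3)])
    show "u x \<noteq> 0" if "a \<le> x" "x \<le> b" for x
      using assms(4) beyond_z[OF \<open>a0 \<le> a\<close> \<open>v a = 0\<close>] that by simp
  qed
  show ?thesis
    using no_second_zero[of r1 r2] no_second_zero[of r2 r1] assms(7-10)
    by (cases r1 r2 rule: linorder_cases) auto
qed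

end

(* u0 = sqrt r * psi solves the lambda = 0 equation iff (r psi')' = -4 m psi / (2r + m)^2,
   which is psi'_deriv; the constant 4m in psi_numer gives u0'(m/2) / u0(m/2) = 1/m. *)
definition psi_numer :: "real \<Rightarrow> real \<Rightarrow> real" where
  "psi_numer m r = 4 * m - (2 * r - m) * (ln (2 * r / m) - 2)"

definition psi :: "real \<Rightarrow> real \<Rightarrow> real" where
  "psi m r = psi_numer m r / (2 * r + m)"

definition psi' :: "real \<Rightarrow> real \<Rightarrow> real" where
  "psi' m r = (m\<^sup>2 - 4 * r\<^sup>2 - 4 * m * r * ln (2 * r / m)) / (r * (2 * r + m)\<^sup>2)"

definition u0 :: "real \<Rightarrow> real \<Rightarrow> real" where
  "u0 m r = sqrt r * psi m r"

definition u0' :: "real \<Rightarrow> real \<Rightarrow> real" where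
  "u0' m r = psi m r / (2 * sqrt r) + sqrt r * psi' m r"

lemma psi_deriv:
  assumes "m > 0" "r > 0"
  shows "(psi m has_real_derivative psi' m r) (at r)"
proof -
  have "((\<lambda>r. (4 * m - (2 * r - m) * (ln (2 * r / m) - 2)) / (2 * r + m))
      has_real_derivative psi' m r) (at r)"
    using assms
    by (auto intro!: derivative_eq_intros simp: psi'_def field_simps power2_eq_square)
  then show ?thesis
    unfolding psi_def[abs_def] psi_numer_def .
qed

lemma psi'_deriv:
  assumes "m > 0" "r > 0"
  shows "(psi' m has_real_derivative - psi' m r / r - psi m r * (4 * m / (r * (2 * r + m)\<^sup>2))) (at r)"
proof -
  have "2 * r + m > 0"
    using assms by simp
  then have "((\<lambda>r. (m\<^sup>2 - 4 * r\<^sup>2 - 4 * m * r * ln (2 * r / m)) / (r * (2 * r + m)\<^sup>2))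
      has_real_derivative - psi' m r / r - psi m r * (4 * m / (r * (2 * r + m)\<^sup>2))) (at r)"
    using assms
    by (auto intro!: derivative_eq_intros simp: psi'_def psi_def psi_numer_def divide_simps)
      algebra
  then show ?thesis
    unfolding psi'_def[abs_def] .
qed

lemma u0_deriv:
  assumes "m > 0" "r > 0"
  shows "(u0 m has_real_derivative u0' m r) (at r)"
proof -
  have "((\<lambda>r. sqrt r * psi m r) has_real_derivative
      inverse (sqrt r) / 2 * psi m r + psi' m r * sqrt r) (at r)"
    by (rule DERIV_mult[OF DERIV_real_sqrt[OF assms(2)] psi_deriv[OF assms]])
  then show ?thesis
    unfolding u0_def[abs_def] by (rule DERIV_cong) (simp add: u0'_def field_simps)
qed

lemma potential_zero_eq:
  assumes "m > 0" "r > 0"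
  shows "potential m 0 r = 1 / (4 * r\<^sup>2) + 4 * m / (r * (2 * r + m)\<^sup>2)"
proof -
  have "1 + m / (2 * r) = (2 * r + m) / (2 * r)"
    using assms by (simp add: field_simps)
  then show ?thesis
    unfolding potential_def using assms
    by (simp add: power_divide field_simps power2_eq_square power3_eq_cube)
qed

lemma u0'_deriv:
  assumes "m > 0" "r > 0"
  shows "(u0' m has_real_derivative - potential m 0 r * u0 m r) (at r)"
proof -
  obtain s where s: "s > 0" "r = s\<^sup>2"
    using assms(2) by (metis real_sqrt_gt_0_iff real_sqrt_pow2 less_imp_le)
  have two_sqrt: "((\<lambda>r. 2 * sqrt r) has_real_derivative 2 * (inverse (sqrt r) / 2)) (at r)"
    using DERIV_cmult[OF DERIV_real_sqrt[OF assms(2)], of 2] by simp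
  have "(u0' m has_real_derivative
      (psi' m r * (2 * sqrt r) - psi m r * (2 * (inverse (sqrt r) / 2))) / (2 * sqrt r * (2 * sqrt r))
      + (inverse (sqrt r) / 2 * psi' m r
         + (- psi' m r / r - psi m r * (4 * m / (r * (2 * r + m)\<^sup>2))) * sqrt r)) (at r)"
    unfolding u0'_def[abs_def] using assms
    by (intro DERIV_add DERIV_divide DERIV_mult psi_deriv psi'_deriv two_sqrt DERIV_real_sqrt) auto
  moreover have "2 * s\<^sup>2 + m > 0"
    using assms s by (simp add: add_pos_nonneg)
  ultimately show ?thesis
    using assms s
    by (elim DERIV_cong) (simp add: potential_zero_eq u0_def field_simps power2_eq_square)
qed

lemma u0_initial_ratio:
  assumes "m > 0"
  shows "u0' m (m / 2) = u0 m (m / 2) / m"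
proof -
  have "psi m (m / 2) = 2" "psi' m (m / 2) = 0"
    using assms by (simp_all add: psi_def psi_numer_def psi'_def power2_eq_square)
  moreover have "sqrt (m / 2) * sqrt (m / 2) = m / 2" "sqrt (m / 2) > 0"
    using assms by simp_all
  ultimately show ?thesis
    unfolding u0'_def u0_def by (simp add: field_simps)
qed

lemma psi_numer_deriv:
  assumes "m > 0" "r > 0"
  shows "(psi_numer m has_real_derivative 2 - 2 * ln (2 * r / m) + m / r) (at r)"
proof -
  have "((\<lambda>r. 4 * m - (2 * r - m) * (ln (2 * r / m) - 2))
      has_real_derivative 2 - 2 * ln (2 * r / m) + m / r) (at r)"
    using assms by (auto intro!: derivative_eq_intros simp: field_simps)
  then show ?thesis
    unfolding psi_numer_def[abs_def] .
qed

lemma psi_numer_pos: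
  assumes "m > 0" "m / 2 \<le> r" "r \<le> m * exp 2 / 2"
  shows "psi_numer m r > 0"
proof -
  have "ln (2 * r / m) \<le> ln (exp 2)"
    using assms by (subst ln_le_cancel_iff) (auto simp: field_simps)
  then have "(2 * r - m) * (ln (2 * r / m) - 2) \<le> 0"
    using assms by (intro mult_nonneg_nonpos) auto
  then show ?thesis
    unfolding psi_numer_def using assms by simp
qed

lemma psi_numer_decreasing:
  assumes "m > 0" "m * exp 2 / 2 \<le> a" "a < b"
  shows "psi_numer m b < psi_numer m a"
proof (rule DERIV_neg_imp_decreasing[OF \<open>a < b\<close>])
  fix x assume "a \<le> x" "x \<le> b"
  then have x: "m * exp 2 / 2 \<le> x"
    using assms by simp
  moreover have "m < m * exp 2"
    using assms by simp
  ultimately have "m < 2 * x"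
    by linarith
  then have "x > 0" "m / x < 2"
    using assms by (simp_all add: field_simps)
  moreover have "ln (exp 2) \<le> ln (2 * x / m)"
    using assms x \<open>x > 0\<close> by (subst ln_le_cancel_iff) (auto simp: field_simps)
  ultimately show "\<exists>y. DERIV (psi_numer m) x :> y \<and> y < 0"
    using psi_numer_deriv[OF assms(1) \<open>x > 0\<close>] by force
qed

lemma psi_numer_neg:
  assumes "m > 0"
  shows "psi_numer m (m * exp 4 / 2) < 0"
proof -
  have "psi_numer m (m * exp 4 / 2) = 6 * m - 2 * (m * exp 4)"
    unfolding psi_numer_def using assms by (simp add: algebra_simps)
  moreover have "m * 5 \<le> m * exp 4"
    using assms exp_ge_add_one_self[of 4] by (intro mult_left_mono) auto
  ultimately show ?thesis
    using assms by linarith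
qed

lemma psi_numer_sign_change:
  assumes "m > 0"
  obtains z where "z > m / 2" "psi_numer m z = 0"
    "\<And>r. m / 2 \<le> r \<Longrightarrow> r < z \<Longrightarrow> psi_numer m r > 0" "\<And>r. r > z \<Longrightarrow> psi_numer m r < 0"
proof -
  define a where "a = m * exp 2 / 2"
  define b where "b = m * exp 4 / 2"
  have "m / 2 < a" "a < b"
    unfolding a_def b_def using assms by simp_all
  have "continuous_on {a..b} (psi_numer m)"
  proof (intro continuous_at_imp_continuous_on ballI)
    fix x assume "x \<in> {a..b}"
    then have "x > 0"
      using assms \<open>m / 2 < a\<close> by auto
    then show "isCont (psi_numer m) x"
      using psi_numer_deriv[OF assms] DERIV_isCont by blast
  qed
  then obtain z where z: "a \<le> z" "z \<le> b" "psi_numer m z = 0"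
    using IVT2'[of "psi_numer m" b 0 a] psi_numer_neg[OF assms] psi_numer_pos[OF assms, of a]
      \<open>m / 2 < a\<close> \<open>a < b\<close> unfolding a_def b_def by fastforce
  show ?thesis
  proof
    show "z > m / 2" "psi_numer m z = 0"
      using z \<open>m / 2 < a\<close> by simp_all
    show "psi_numer m r > 0" if "m / 2 \<le> r" "r < z" for r
    proof (cases "r \<le> a")
      case True
      then show ?thesis
        using psi_numer_pos[OF assms that(1)] unfolding a_def by simp
    next
      case False
      then show ?thesis
        using psi_numer_decreasing[OF assms, of r z] that z unfolding a_def by simp
    qed
    show "psi_numer m r < 0" if "r > z" for r
      using psi_numer_decreasing[OF assms, of z r] that z unfolding a_def by simp
  qed
qed

lemma u0_sign_change:
  assumes "m > 0"
  obtains z where "z > m / 2" "u0 m z = 0"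
    "\<And>r. m / 2 \<le> r \<Longrightarrow> r < z \<Longrightarrow> u0 m r > 0" "\<And>r. r > z \<Longrightarrow> u0 m r < 0"
proof -
  obtain z where z: "z > m / 2" "psi_numer m z = 0"
    "\<And>r. m / 2 \<le> r \<Longrightarrow> r < z \<Longrightarrow> psi_numer m r > 0" "\<And>r. r > z \<Longrightarrow> psi_numer m r < 0"
    using psi_numer_sign_change[OF assms] by metis
  have u0_eq: "u0 m r = sqrt r / (2 * r + m) * psi_numer m r" for r
    by (simp add: u0_def psi_def)
  have factor_pos: "sqrt r / (2 * r + m) > 0" if "r \<ge> m / 2" for r
    using assms that by simp
  show ?thesis
  proof
    show "z > m / 2" "u0 m z = 0"
      using z by (simp_all add: u0_eq)
    show "u0 m r > 0" if "m / 2 \<le> r" "r < z" for r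
      using factor_pos[of r] z(3)[OF that] that unfolding u0_eq by (simp only: mult_pos_pos)
    show "u0 m r < 0" if "r > z" for r
      using factor_pos[of r] z(4)[OF that] that \<open>z > m / 2\<close> unfolding u0_eq
      by (simp only: mult_pos_neg)
  qed
qed

lemma potential_bounded:
  assumes "m > 0" "r \<ge> m / 2"
  shows "\<bar>potential m lam r\<bar> \<le> 9 / m\<^sup>2 + 16 * \<bar>lam\<bar>"
proof -
  define x where "x = m / (2 * r)"
  have "r > 0" "x > 0" "x \<le> 1"
    unfolding x_def using assms by (auto simp: field_simps)
  have "1 / (4 * r\<^sup>2) \<le> 1 / m\<^sup>2"
  proof -
    have "m\<^sup>2 \<le> (2 * r)\<^sup>2"
      using assms by (intro power_mono) auto
    then show ?thesis
      using assms by (simp add: field_simps power2_eq_square)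
  qed
  moreover have "(m / r ^ 3) / (1 + x)\<^sup>2 \<le> 8 / m\<^sup>2"
  proof -
    have "(1 + x)\<^sup>2 \<ge> 1"
      using \<open>x > 0\<close> by simp
    then have "(m / r ^ 3) / (1 + x)\<^sup>2 \<le> (m / r ^ 3) / 1"
      using assms \<open>r > 0\<close> by (intro divide_left_mono) auto
    moreover have "m ^ 3 \<le> (2 * r) ^ 3"
      using assms by (intro power_mono) auto
    then have "m / r ^ 3 \<le> 8 / m\<^sup>2"
      using assms \<open>r > 0\<close> by (simp add: field_simps power2_eq_square power3_eq_cube)
    ultimately show ?thesis
      by simp
  qed
  moreover have "\<bar>lam * (1 + x) ^ 4\<bar> \<le> 16 * \<bar>lam\<bar>"
  proof -
    have "(1 + x) ^ 4 \<le> 2 ^ 4"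
      using \<open>x > 0\<close> \<open>x \<le> 1\<close> by (intro power_mono) auto
    then have "\<bar>lam\<bar> * (1 + x) ^ 4 \<le> \<bar>lam\<bar> * 16"
      by (intro mult_left_mono) auto
    then show ?thesis
      using \<open>x > 0\<close> by (simp add: abs_mult)
  qed
  moreover have "potential m lam r = 1 / (4 * r\<^sup>2) + (m / r ^ 3) / (1 + x)\<^sup>2 + lam * (1 + x) ^ 4"
    unfolding potential_def x_def by simp
  moreover have "1 / (4 * r\<^sup>2) \<ge> 0" "(m / r ^ 3) / (1 + x)\<^sup>2 \<ge> 0"
    using assms \<open>r > 0\<close> by simp_all
  moreover have "9 / m\<^sup>2 = 1 / m\<^sup>2 + 8 / m\<^sup>2"
    by (simp add: add_divide_distrib[symmetric])
  ultimately show ?thesis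
    by (simp only: abs_le_iff) linarith
qed

theorem mainTheorem8:
  fixes m lam :: real and v v' v'' :: "real \<Rightarrow> real"
  assumes "m > 0" and "lam < 0"
    and "\<And>r. r \<ge> m/2 \<Longrightarrow> (v has_real_derivative v' r) (at r within {m/2..})"
    and "\<And>r. r \<ge> m/2 \<Longrightarrow> (v' has_real_derivative v'' r) (at r within {m/2..})"
    and "\<And>r. r \<ge> m/2 \<Longrightarrow> v'' r + v r * potential m lam r = 0"
    and "v (m/2) = 1" and "v' (m/2) = 1 / m"
  shows "\<forall>r1 r2. r1 \<ge> m/2 \<and> r2 \<ge> m/2 \<and> v r1 = 0 \<and> v r2 = 0 \<longrightarrow> r1 = r2"
proof -
  define c where "c r = - lam * (1 + m / (2 * r)) ^ 4" for r
  have v'_deriv: "(v' has_real_derivative - potential m lam r * v r) (at r within {m/2..})"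
    if "r \<ge> m/2" for r
    using assms(4)[OF that] by (rule DERIV_cong) (use assms(5)[OF that] in \<open>auto simp: algebra_simps\<close>)
  interpret sturm_comparison "m/2" "potential m 0" c "u0 m" "u0' m" v v'
  proof
    fix r assume "r \<ge> m/2"
    then have "r > 0"
      using assms(1) by simp
    show "(u0 m has_real_derivative u0' m r) (at r within {m/2..})"
      "(u0' m has_real_derivative - potential m 0 r * u0 m r) (at r within {m/2..})"
      using u0_deriv u0'_deriv assms(1) \<open>r > 0\<close> by (auto intro: has_field_derivative_at_within)
    show "(v has_real_derivative v' r) (at r within {m/2..})"
      using assms(3) \<open>r \<ge> m/2\<close> .
    show "(v' has_real_derivative - (potential m 0 r - c r) * v r) (at r within {m/2..})"
      using v'_deriv[OF \<open>r \<ge> m/2\<close>] by (simp add: c_def potential_def algebra_simps)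
    show "c r > 0"
      unfolding c_def using assms(1,2) \<open>r > 0\<close> by (intro mult_pos_pos zero_less_power add_pos_pos) auto
    show "v' r \<noteq> 0" if "v r = 0"
      using linear_ode_vanishing_data_backward[OF assms(3) v'_deriv potential_bounded[OF assms(1)]
          \<open>r \<ge> m/2\<close> that] assms(6) by auto
  qed
  obtain z where "z > m/2" "u0 m z = 0"
    "\<And>r. m/2 \<le> r \<Longrightarrow> r < z \<Longrightarrow> u0 m r > 0" "\<And>r. r > z \<Longrightarrow> u0 m r < 0"
    using u0_sign_change[OF assms(1)] by metis
  moreover have "wronskian (m/2) = 0"
    using u0_initial_ratio[OF assms(1)] assms(6,7) by (simp add: wronskian_def)
  ultimately show ?thesis
    using at_most_one_zero[of z] assms(6) by (metis less_irrefl zero_less_one)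
qed

end
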